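(* Let $a, b, n$ be positive integers with $b>1$, $n>1$ and $\gcd(r_b(n),a)=1$. Then the set of pseudo-Frobenius numbers of $S_a(b,n)$ is \[\operatorname{PF}(S_a(b,n)) = \{(n-i+1)\,(b^n - 1 - a) + a\, r_b(n) \mid i = 2,\ldots,n\},\] and consequently the type of $S_a(b,n)$ equals $n-1$.
   Context: For $\ell \ge 1$, $r_b(\ell) = \sum_{j=0}^{\ell-1} b^j$, and $r_b(0)=0$. For $i \ge 1$, $a_i := r_b(n) + a\, r_b(i-1)$; $S_a(b,n)$ is the numerical semigroup generated by $\{a_i\}$. An integer $x$ is a pseudo-Frobenius number of a numerical semigroup $S$ if $x \notin S$ and $x + s \in S$ for all $s \in S\setminus\{0\}$; $\operatorname{PF}(S)$ is the set of these, and the type $\operatorname{t}(S)$ is its cardinality. *)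

theory Defs
  imports Main
begin

definition rb :: "nat \<Rightarrow> nat \<Rightarrow> nat" where
  "rb b l = (\<Sum>j<l. b ^ j)"

definition gen_a :: "nat \<Rightarrow> nat \<Rightarrow> nat \<Rightarrow> nat \<Rightarrow> nat" where
  "gen_a a b n i = rb b n + a * rb b (i - 1)"

inductive_set semigroup_gen :: "int set \<Rightarrow> int set" for G :: "int set" where
  zero: "0 \<in> semigroup_gen G"
| add: "g \<in> G \<Longrightarrow> s \<in> semigroup_gen G \<Longrightarrow> g + s \<in> semigroup_gen G"

definition S_sg :: "nat \<Rightarrow> nat \<Rightarrow> nat \<Rightarrow> int set" where
  "S_sg a b n = semigroup_gen {int (gen_a a b n i) | i. i \<ge> 1}"

definition PF :: "int set \<Rightarrow> int set" where
  "PF S = {x. x \<notin> S \<and> (\<forall>s \<in> S - {0}. x + s \<in> S)}"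

definition sg_type :: "int set \<Rightarrow> nat" where
  "sg_type S = card (PF S)"

end

theory Submission
  imports Defs "HOL-Number_Theory.Cong"
begin

text \<open>Write \<open>r = r_b(n)\<close>. The elements of \<open>S_a(b,n)\<close> are the numbers \<open>C r + a T\<close> where \<open>T\<close> is
  a sum of \<open>C\<close> repunits; since \<open>b^e = (b - 1) r_b(e) + 1\<close>, this says that \<open>C + (b - 1) T\<close> is a sum of
  exactly \<open>C\<close> powers of \<open>b\<close>. Such a sum has base-\<open>b\<close> digit sum at most \<open>C\<close>, and conversely a sum of
  \<open>C\<close> powers can be lengthened by \<open>b - 1\<close> terms (split some \<open>b^{e+1}\<close> into \<open>b\<close> copies of \<open>b^e\<close>)
  as long as it contains a power other than \<open>1\<close>.

  The candidates \<open>j (b - 1) r + a (r - j)\<close>, \<open>1 \<le> j < n\<close>, are gaps: a representation would, by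
  coprimality of \<open>r\<close> and \<open>a\<close>, make a positive multiple of \<open>b^n - 1\<close> a sum of fewer than \<open>n (b - 1)\<close>
  powers of \<open>b\<close>, whereas folding digits modulo \<open>b^n - 1\<close> shows that every such multiple has digit
  sum at least \<open>n (b - 1)\<close>. Adding a generator to a candidate gives an explicit power-sum
  representation. Finally every gap \<open>y\<close> lies below a candidate in the order of the semigroup, by a
  greedy expansion of the solution of \<open>a T \<equiv> y (mod r)\<close> in repunits; so the pseudo-Frobenius
  numbers are exactly the \<open>n - 1\<close> distinct candidates.\<close>

lemma rb_0 [simp]: "rb b 0 = 0"
  by (simp add: rb_def)

lemma rb_Suc: "rb b (Suc e) = rb b e + b ^ e"
  by (simp add: rb_def)

lemma rb_Suc_mult: "rb b (Suc e) = b * rb b e + 1"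
  unfolding rb_def by (subst sum.lessThan_Suc_shift) (simp add: sum_distrib_left)

lemma rb_pred_mult: "b \<ge> 1 \<Longrightarrow> (b - 1) * rb b e + 1 = b ^ e"
proof (induction e)
  case (Suc e)
  have "(b - 1) * rb b (Suc e) + 1 = ((b - 1) * rb b e + 1) + (b - 1) * b ^ e"
    by (simp add: rb_Suc algebra_simps)
  also have "\<dots> = b * b ^ e"
    using Suc by (simp add: algebra_simps)
  finally show ?case by simp
qed simp

lemma le_rb: "b \<ge> 1 \<Longrightarrow> e \<le> rb b e"
proof (induction e)
  case (Suc e)
  then have "0 < b ^ e" by simp
  with Suc show ?case unfolding rb_Suc by linarith
qed simp

function digit_sum :: "nat \<Rightarrow> nat \<Rightarrow> nat" where
  "digit_sum b x = (if b < 2 \<or> x = 0 then 0 else x mod b + digit_sum b (x div b))"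
  by pat_completeness auto
termination by (relation "measure snd") auto

declare digit_sum.simps [simp del]

lemma digit_sum_0 [simp]: "digit_sum b 0 = 0"
  by (simp add: digit_sum.simps)

lemma digit_sum_eq: "b \<ge> 2 \<Longrightarrow> digit_sum b x = x mod b + digit_sum b (x div b)"
  by (cases "x = 0") (simp_all add: digit_sum.simps [of b x])

lemma digit_sum_less: "b \<ge> 2 \<Longrightarrow> x < b \<Longrightarrow> digit_sum b x = x"
  using digit_sum_eq [of b x] by simp

lemma digit_sum_mult_power_add:
  assumes "b \<ge> 2" and "s < b ^ k"
  shows "digit_sum b (q * b ^ k + s) = digit_sum b q + digit_sum b s"
  using assms(2)
proof (induction k arbitrary: s)
  case (Suc k)
  have "(q * b ^ Suc k + s) div b = q * b ^ k + s div b"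
    using assms(1) by (simp add: mult.left_commute [of _ b])
  moreover have "(q * b ^ Suc k + s) mod b = s mod b"
    by (simp add: mult.left_commute [of _ b])
  moreover have "s div b < b ^ k"
    using Suc.prems assms(1) by (simp add: div_less_iff_less_mult mult.commute)
  ultimately show ?case
    using Suc.IH digit_sum_eq [OF assms(1), of s] digit_sum_eq [OF assms(1), of "q * b ^ Suc k + s"]
    by simp
qed simp

lemma digit_sum_Suc_le:
  assumes "b \<ge> 2"
  shows "digit_sum b (Suc x) \<le> Suc (digit_sum b x)"
proof (induction x rule: less_induct)
  case (less x)
  show ?case
  proof (cases "Suc x mod b = 0")
    case False
    then show ?thesis
      using digit_sum_eq [OF assms, of x] digit_sum_eq [OF assms, of "Suc x"]
      by (simp add: mod_Suc div_Suc split: if_splits)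
  next
    case True
    then have "x mod b = b - 1" and "Suc x div b = Suc (x div b)"
      using assms by (auto simp: mod_Suc div_Suc split: if_splits)
    moreover have "x div b < x"
      using True assms by (cases "x = 0") auto
    ultimately show ?thesis
      using less digit_sum_eq [OF assms, of x] digit_sum_eq [OF assms, of "Suc x"] True
      by fastforce
  qed
qed

lemma digit_sum_add_power_le:
  assumes "b \<ge> 2"
  shows "digit_sum b (x + b ^ e) \<le> Suc (digit_sum b x)"
proof (induction e arbitrary: x)
  case 0
  then show ?case using digit_sum_Suc_le [OF assms] by simp
next
  case (Suc e)
  have "x + b ^ Suc e = (x div b + b ^ e) * b ^ 1 + x mod b"
    by (simp add: algebra_simps)
  then have "digit_sum b (x + b ^ Suc e) = digit_sum b (x div b + b ^ e) + x mod b"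
    using assms digit_sum_mult_power_add [OF assms, of "x mod b" 1] digit_sum_less [OF assms]
    by simp
  then show ?case
    using Suc.IH [of "x div b"] digit_sum_eq [OF assms, of x] by simp
qed

lemma digit_sum_power_minus_one: "b \<ge> 2 \<Longrightarrow> digit_sum b (b ^ n - 1) = n * (b - 1)"
proof (induction n)
  case (Suc n)
  have "b ^ Suc n - 1 = (b ^ n - 1) * b ^ 1 + (b - 1)"
    using Suc.prems by (simp add: algebra_simps diff_mult_distrib)
  then show ?case
    using Suc digit_sum_mult_power_add [OF Suc.prems, of "b - 1" 1] digit_sum_less
    by simp
qed simp

inductive power_sum :: "nat \<Rightarrow> nat \<Rightarrow> nat \<Rightarrow> bool" for b where
  empty: "power_sum b 0 0"
| add_power: "power_sum b C P \<Longrightarrow> power_sum b (Suc C) (P + b ^ e)"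

lemma power_sum_add:
  assumes "power_sum b C P"
  shows "power_sum b C' P' \<Longrightarrow> power_sum b (C + C') (P + P')"
proof (induction rule: power_sum.induct)
  case (add_power C' P' e)
  then show ?case
    using power_sum.add_power [of b "C + C'" "P + P'" e] by (simp add: add.assoc)
qed (simp add: assms)

lemma power_sum_replicate: "power_sum b k (k * b ^ e)"
proof (induction k)
  case (Suc k)
  then show ?case
    using power_sum.add_power [of b k "k * b ^ e" e] by (simp add: add.commute)
qed (simp add: power_sum.empty)

lemma power_sum_times_base: "power_sum b C P \<Longrightarrow> power_sum b C (b * P)"
proof (induction rule: power_sum.induct)
  case (add_power C P e)
  then show ?case
    using power_sum.add_power [of b C "b * P" "Suc e"] by (simp add: algebra_simps)
qed (simp add: power_sum.empty)

lemma power_sum_digit_sum: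
  assumes "b \<ge> 2"
  shows "power_sum b (digit_sum b x) x"
proof (induction x rule: less_induct)
  case (less x)
  show ?case
  proof (cases "x = 0")
    case True
    then show ?thesis by (simp add: power_sum.empty)
  next
    case False
    then have "power_sum b (digit_sum b (x div b)) (b * (x div b))"
      using less assms by (intro power_sum_times_base) simp
    then have "power_sum b (digit_sum b (x div b) + x mod b) (b * (x div b) + x mod b * b ^ 0)"
      by (rule power_sum_add [OF _ power_sum_replicate])
    then show ?thesis
      using digit_sum_eq [OF assms, of x] by (simp add: add.commute)
  qed
qed

lemma digit_sum_add_power_sum_le:
  assumes "b \<ge> 2"
  shows "power_sum b C P \<Longrightarrow> digit_sum b (x + P) \<le> digit_sum b x + C"
proof (induction rule: power_sum.induct)
  case (add_power C P e)
  then show ?case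
    using digit_sum_add_power_le [OF assms, of "x + P" e] by (simp add: add.assoc)
qed simp

lemma digit_sum_le_power_sum: "b \<ge> 2 \<Longrightarrow> power_sum b C P \<Longrightarrow> digit_sum b P \<le> C"
  using digit_sum_add_power_sum_le [of b C P 0] by simp

lemma digit_sum_add_le: "b \<ge> 2 \<Longrightarrow> digit_sum b (x + y) \<le> digit_sum b x + digit_sum b y"
  by (rule digit_sum_add_power_sum_le [OF _ power_sum_digit_sum])

lemma digit_sum_multiple_ge:
  assumes b: "b \<ge> 2" and n: "n \<ge> 1"
  shows "X > 0 \<Longrightarrow> (b ^ n - 1) dvd X \<Longrightarrow> n * (b - 1) \<le> digit_sum b X"
proof (induction X rule: less_induct)
  case (less X)
  have N: "b ^ n \<ge> 2"
    using power_increasing [OF n, of b] b by simp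
  show ?case
  proof (cases "X < b ^ n")
    case True
    obtain k where k: "X = (b ^ n - 1) * k"
      using less.prems by blast
    have "k = 1"
    proof (rule ccontr)
      assume "k \<noteq> 1"
      then have "k \<ge> 2" using k less.prems by (cases k) auto
      then have "(b ^ n - 1) * 2 \<le> X" unfolding k by (rule mult_le_mono2)
      then show False using True N by linarith
    qed
    then show ?thesis using k digit_sum_power_minus_one [OF b] by simp
  next
    case False
    define q where "q = X div b ^ n"
    define s where "s = X mod b ^ n"
    have X: "X = q * b ^ n + s"
      unfolding q_def s_def by (rule div_mult_mod_eq [symmetric])
    have "q \<ge> 1"
      using False b by (simp add: q_def div_greater_zero_iff Suc_le_eq)
    \<comment> \<open>Folding the high digits onto the low ones keeps the residue modulo \<open>b ^ n - 1\<close>.\<close>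
    have X': "X = (q + s) + q * (b ^ n - 1)"
      using X N by (simp add: diff_mult_distrib2)
    have "0 < q * (b ^ n - 1)"
      using \<open>q \<ge> 1\<close> N by simp
    then have "q + s < X"
      using X' by linarith
    moreover have "(b ^ n - 1) dvd (q + s)"
      using less.prems(2) X' by (metis dvd_add_left_iff dvd_triv_right)
    ultimately have "n * (b - 1) \<le> digit_sum b (q + s)"
      using less.IH \<open>q \<ge> 1\<close> by simp
    also have "\<dots> \<le> digit_sum b q + digit_sum b s"
      by (rule digit_sum_add_le [OF b])
    also have "\<dots> = digit_sum b X"
    proof -
      have "s < b ^ n" using b by (simp add: s_def)
      then show ?thesis using X digit_sum_mult_power_add [OF b, of s n q] by simp
    qed
    finally show ?thesis .
  qed
qed

lemma power_sum_split_power: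
  assumes "b \<ge> 1"
  shows "power_sum b C P \<Longrightarrow> C < P \<Longrightarrow> power_sum b (C + (b - 1)) P"
proof (induction rule: power_sum.induct)
  case (add_power C P e)
  show ?case
  proof (cases e)
    case 0
    then have "power_sum b (C + (b - 1)) P"
      using add_power by simp
    then show ?thesis
      using power_sum.add_power [of b "C + (b - 1)" P 0] 0 by simp
  next
    case (Suc e')
    have "power_sum b (C + b) (P + b * b ^ e')"
      by (rule power_sum_add [OF add_power.hyps power_sum_replicate])
    then show ?thesis using Suc assms by simp
  qed
qed simp

lemma power_sum_more_terms:
  assumes "b \<ge> 1" and "power_sum b C P"
  shows "C + k * (b - 1) \<le> P \<Longrightarrow> power_sum b (C + k * (b - 1)) P"
proof (induction k)
  case (Suc k)
  show ?case
  proof (cases "b = 1")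
    case False
    then have "C + k * (b - 1) < P" using Suc.prems assms(1) by simp
    with Suc have "power_sum b (C + k * (b - 1) + (b - 1)) P"
      by (intro power_sum_split_power [OF assms(1)]) simp_all
    then show ?thesis by (simp only: mult_Suc ac_simps)
  qed (use assms in simp)
qed (simp add: assms)

lemma power_sum_repunit: "power_sum b (k * e) (k * rb b e)"
proof (induction e)
  case (Suc e)
  show ?case
    using power_sum_add [OF Suc power_sum_replicate [of b k e]]
    by (simp add: rb_Suc algebra_simps)
qed (simp add: power_sum.empty)

inductive repunit_sum :: "nat \<Rightarrow> nat \<Rightarrow> nat \<Rightarrow> bool" for b where
  empty: "repunit_sum b 0 0"
| add_repunit: "repunit_sum b C T \<Longrightarrow> repunit_sum b (Suc C) (T + rb b e)"

lemma repunit_sum_add: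
  assumes "repunit_sum b C T"
  shows "repunit_sum b C' T' \<Longrightarrow> repunit_sum b (C + C') (T + T')"
proof (induction rule: repunit_sum.induct)
  case (add_repunit C' T' e)
  then show ?case
    using repunit_sum.add_repunit [of b "C + C'" "T + T'" e] by (simp add: add.assoc)
qed (simp add: assms)

lemma repunit_sum_replicate: "repunit_sum b k (k * rb b e)"
proof (induction k)
  case (Suc k)
  then show ?case
    using repunit_sum.add_repunit [of b k "k * rb b e" e] by (simp add: add.commute)
qed (simp add: repunit_sum.empty)

lemma repunit_sum_pad: "repunit_sum b C T \<Longrightarrow> repunit_sum b (C + t) T"
  using repunit_sum_add [OF _ repunit_sum_replicate [of b t 0]] by simp

lemma repunit_sum_imp_power_sum:
  assumes "b \<ge> 1"
  shows "repunit_sum b C T \<Longrightarrow> power_sum b C (C + (b - 1) * T)"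
proof (induction rule: repunit_sum.induct)
  case (add_repunit C T e)
  have "Suc C + (b - 1) * (T + rb b e) = (C + (b - 1) * T) + b ^ e"
    using rb_pred_mult [OF assms, of e] by (simp add: distrib_left)
  then show ?case
    using power_sum.add_power [OF add_repunit.IH, of e] by (simp only:)
qed (simp add: power_sum.empty)

lemma power_sum_imp_repunit_sum:
  assumes b: "b \<ge> 2" and P: "power_sum b C (C + (b - 1) * T)"
  shows "repunit_sum b C T"
proof -
  have "\<exists>T'. repunit_sum b C T' \<and> P' = C + (b - 1) * T'" if "power_sum b C P'" for P'
    using that
  proof (induction rule: power_sum.induct)
    case empty
    show ?case by (intro exI [of _ 0]) (simp add: repunit_sum.empty)
  next
    case (add_power C P e)
    then obtain T' where "repunit_sum b C T'" and "P = C + (b - 1) * T'"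
      by blast
    then show ?case
      using repunit_sum.add_repunit [of b C T' e] rb_pred_mult [of b e, symmetric] b
      by (intro exI [of _ "T' + rb b e"]) (simp add: distrib_left)
  qed
  then obtain T' where "repunit_sum b C T'" and "C + (b - 1) * T = C + (b - 1) * T'"
    using P by blast
  with b show ?thesis by simp
qed

lemma mem_S_sg_iff:
  "x \<in> S_sg a b n \<longleftrightarrow> (\<exists>C T. repunit_sum b C T \<and> x = int (C * rb b n + a * T))"
proof
  assume "x \<in> S_sg a b n"
  then show "\<exists>C T. repunit_sum b C T \<and> x = int (C * rb b n + a * T)"
    unfolding S_sg_def
  proof (induction rule: semigroup_gen.induct)
    case zero
    show ?case using repunit_sum.empty by fastforce
  next
    case (add g s)
    then obtain i C T where "g = int (gen_a a b n i)" and "repunit_sum b C T"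
      and "s = int (C * rb b n + a * T)"
      by blast
    then show ?case
      using repunit_sum.add_repunit [of b C T "i - 1"]
      by (intro exI [of _ "Suc C"] exI [of _ "T + rb b (i - 1)"]) (simp add: gen_a_def algebra_simps)
  qed
next
  assume "\<exists>C T. repunit_sum b C T \<and> x = int (C * rb b n + a * T)"
  then obtain C T where C: "repunit_sum b C T" and x: "x = int (C * rb b n + a * T)"
    by blast
  from C have "int (C * rb b n + a * T) \<in> S_sg a b n"
  proof (induction rule: repunit_sum.induct)
    case empty
    then show ?case by (simp add: S_sg_def semigroup_gen.zero)
  next
    case (add_repunit C T e)
    have "int (gen_a a b n (Suc e)) \<in> {int (gen_a a b n i) | i. i \<ge> 1}"
      by (intro CollectI exI [of _ "Suc e"]) simp
    then have "int (gen_a a b n (Suc e)) + int (C * rb b n + a * T) \<in> S_sg a b n"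
      using add_repunit.IH unfolding S_sg_def by (rule semigroup_gen.add)
    then show ?case by (simp add: gen_a_def algebra_simps)
  qed
  then show "x \<in> S_sg a b n" using x by simp
qed

lemma mem_S_sg_of_power_sum:
  "b \<ge> 2 \<Longrightarrow> power_sum b C (C + (b - 1) * T) \<Longrightarrow> int (C * rb b n + a * T) \<in> S_sg a b n"
  using mem_S_sg_iff power_sum_imp_repunit_sum by blast

lemma add_mem_semigroup_gen:
  assumes "\<forall>g \<in> G. x + g \<in> semigroup_gen G"
  shows "s \<in> semigroup_gen G \<Longrightarrow> s \<noteq> 0 \<Longrightarrow> x + s \<in> semigroup_gen G"
proof (induction rule: semigroup_gen.induct)
  case (add g s)
  show ?case
  proof (cases "s = 0")
    case False
    then have "x + s \<in> semigroup_gen G"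
      using add.IH by simp
    then have "g + (x + s) \<in> semigroup_gen G"
      by (rule semigroup_gen.add [OF add.hyps(1)])
    then show ?thesis by (simp add: ac_simps)
  qed (use assms add.hyps in simp)
qed simp

text \<open>The greedy expansion of \<open>T\<close> as a sum of repunits \<open>r_b(i)\<close>, \<open>n - j \<le> i < n\<close>, uses each
  \<open>r_b(i)\<close> at most \<open>b - 1\<close> times, except \<open>r_b(n - j)\<close> which may occur \<open>b\<close> times; filling every
  multiplicity up to its bound gives \<open>T'\<close>.\<close>
lemma repunit_sum_complement:
  assumes b: "b \<ge> 2" and "n \<ge> 2" and "T < rb b n"
  shows "\<exists>j C C' T'. 1 \<le> j \<and> j < n \<and> repunit_sum b C T \<and> repunit_sum b C' T' \<and>
           C + C' = j * (b - 1) + 1 \<and> T + T' + j = rb b n"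
  using assms(2,3)
proof (induction n arbitrary: T rule: nat_induct_at_least)
  case base
  then have "T \<le> b" by (simp add: rb_def numeral_2_eq_2)
  then show ?case
    using repunit_sum_replicate [of b T 1] repunit_sum_replicate [of b "b - T" 1] b
    by (intro exI [of _ 1] exI [of _ T] exI [of _ "b - T"] exI [of _ "b - T"])
       (simp_all add: rb_def numeral_2_eq_2)
next
  case (Suc n)
  define q where "q = T div rb b n"
  define s where "s = T mod rb b n"
  have T: "T = q * rb b n + s"
    unfolding q_def s_def by (rule div_mult_mod_eq [symmetric])
  have "rb b n > 0" using le_rb [of b n] b Suc.hyps by simp
  then have "s < rb b n" by (simp add: s_def)
  have "q * rb b n < b * rb b n + 1"
    using Suc.prems T rb_Suc_mult [of b n] by linarith
  have "q \<le> b"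
  proof (rule ccontr)
    assume "\<not> q \<le> b"
    then have "Suc b * rb b n \<le> q * rb b n" by (intro mult_le_mono1) simp
    then show False using \<open>q * rb b n < b * rb b n + 1\<close> \<open>rb b n > 0\<close> by simp
  qed
  show ?case
  proof (cases "q = b")
    case True
    then have "s = 0" using T Suc.prems rb_Suc_mult [of b n] by simp
    then show ?thesis
      using True T Suc.hyps repunit_sum_replicate [of b b n] repunit_sum.empty rb_Suc_mult [of b n] b
      by (intro exI [of _ 1] exI [of _ b] exI [of _ 0] exI [of _ 0]) simp
  next
    case False
    obtain j C C' T' where IH: "1 \<le> j" "j < n" "repunit_sum b C s" "repunit_sum b C' T'"
      "C + C' = j * (b - 1) + 1" "s + T' + j = rb b n"
      using Suc.IH [OF \<open>s < rb b n\<close>] by blast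
    have "repunit_sum b (C + q) T"
      using repunit_sum_add [OF IH(3) repunit_sum_replicate [of b q n]] T by (simp add: add.commute)
    moreover have "repunit_sum b (C' + (b - 1 - q)) (T' + (b - 1 - q) * rb b n)"
      using repunit_sum_add [OF IH(4) repunit_sum_replicate] .
    moreover have "C + q + (C' + (b - 1 - q)) = Suc j * (b - 1) + 1"
      using IH(5) False \<open>q \<le> b\<close> by simp
    moreover have "T + (T' + (b - 1 - q) * rb b n) + Suc j = rb b (Suc n)"
    proof -
      have "T + (T' + (b - 1 - q) * rb b n) + Suc j
          = (s + T' + j) + (q * rb b n + (b - 1 - q) * rb b n) + 1"
        using T by simp
      also have "\<dots> = rb b n + (b - 1) * rb b n + 1"
        using IH(6) False \<open>q \<le> b\<close> by (simp flip: add_mult_distrib)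
      also have "\<dots> = rb b (Suc n)"
        using b rb_Suc_mult [of b n] by (cases b) simp_all
      finally show ?thesis .
    qed
    ultimately show ?thesis
      using IH(1,2) by (intro exI [of _ "Suc j"] exI [of _ "C + q"] exI [of _ "C' + (b - 1 - q)"]
        exI [of _ "T' + (b - 1 - q) * rb b n"]) simp
  qed
qed

text \<open>With \<open>j = n - i + 1\<close> this is the paper's \<open>(n - i + 1)(b^n - 1 - a) + a r_b(n)\<close>,
  see \<open>int_pf_element\<close>.\<close>
definition pf_element :: "nat \<Rightarrow> nat \<Rightarrow> nat \<Rightarrow> nat \<Rightarrow> nat" where
  "pf_element a b n j = j * (b - 1) * rb b n + a * (rb b n - j)"

context
  fixes a b n :: nat
  assumes b: "b \<ge> 2" and n: "n \<ge> 2" and coprime: "coprime (rb b n) a"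
begin

lemma n_le_rb: "n \<le> rb b n"
  using le_rb b by simp

lemma power_eq_rb: "b ^ n = (b - 1) * rb b n + 1"
  using rb_pred_mult [of b n] b by simp

lemma pf_element_eq_repr:
  assumes j: "1 \<le> j" "j < n" and eq: "pf_element a b n j = C * rb b n + a * T"
  obtains k where "k \<ge> 1" and "T + j = rb b n * k" and "C + a * (k - 1) = j * (b - 1)"
proof -
  define r where "r = rb b n"
  obtain d where r: "r = j + d"
    using j n_le_rb le_Suc_ex unfolding r_def by (metis le_trans less_imp_le)
  have eq': "C * r + a * (T + j) = (j * (b - 1) + a) * r"
    using eq unfolding pf_element_def r_def [symmetric] r by (simp add: algebra_simps)
  then have "r dvd a * (T + j)"
    by (metis dvd_add_right_iff dvd_triv_right)
  then have "r dvd T + j"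
    using coprime coprime_dvd_mult_right_iff unfolding r_def by blast
  then obtain k where k: "T + j = r * k"
    by blast
  have "k \<ge> 1"
    using k j by (cases k) auto
  have "(C + a * k) * r = (j * (b - 1) + a) * r"
    using eq' k by (simp add: algebra_simps)
  then have "C + a * (k - 1) = j * (b - 1)"
    using r j \<open>k \<ge> 1\<close> by (cases k) simp_all
  with \<open>k \<ge> 1\<close> k show thesis
    using that unfolding r_def by blast
qed

lemma pf_element_not_mem:
  assumes j: "1 \<le> j" "j < n"
  shows "int (pf_element a b n j) \<notin> S_sg a b n"
proof
  assume "int (pf_element a b n j) \<in> S_sg a b n"
  then obtain C T where CT: "repunit_sum b C T" and eq: "pf_element a b n j = C * rb b n + a * T"
    unfolding mem_S_sg_iff of_nat_eq_iff by blast
  obtain k where "k \<ge> 1" and k: "T + j = rb b n * k" and Cjk: "C + a * (k - 1) = j * (b - 1)"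
    using pf_element_eq_repr [OF j eq] .
  have "(b ^ n - 1) * k = (b - 1) * (T + j)"
    using power_eq_rb k by (simp add: mult.assoc)
  also have "\<dots> = (b - 1) * T + j * (b - 1)"
    by (simp only: add_mult_distrib2 mult.commute [of j])
  also have "\<dots> = (C + (b - 1) * T) + a * (k - 1) * b ^ 0"
    using Cjk by simp
  finally have "power_sum b (C + a * (k - 1)) ((b ^ n - 1) * k)"
    using power_sum_add [OF repunit_sum_imp_power_sum [OF _ CT] power_sum_replicate [of b _ 0]] b
    by simp
  then have "digit_sum b ((b ^ n - 1) * k) \<le> j * (b - 1)"
    using digit_sum_le_power_sum [OF b] Cjk by simp
  moreover have "n * (b - 1) \<le> digit_sum b ((b ^ n - 1) * k)"
    using digit_sum_multiple_ge [OF b, of n] n \<open>k \<ge> 1\<close> one_less_power [of b n] b by simp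
  moreover have "j * (b - 1) < n * (b - 1)"
    using j b by simp
  ultimately show False
    by linarith
qed

lemma pf_element_add_gen_mem:
  assumes j: "1 \<le> j" "j < n"
  shows "int (pf_element a b n j) + int (gen_a a b n i) \<in> S_sg a b n"
proof -
  define r where "r = rb b n"
  define e where "e = i - 1"
  obtain c where c: "b = Suc c"
    using b by (cases b) auto
  obtain d where r: "r = j + d"
    using j n_le_rb le_Suc_ex unfolding r_def by (metis le_trans less_imp_le)
  have pf_gen: "pf_element a b n j + gen_a a b n i = j * (b - 1) * r + a * d + r + a * rb b e"
    unfolding pf_element_def gen_a_def r_def [symmetric] e_def r by simp
  have "j * (b - 1) + 1 \<le> b ^ n"
    using power_eq_rb r j by (simp add: r_def [symmetric])
  consider "e \<le> j" | "j < e" by linarith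
  then show ?thesis
  proof cases
    case 1
    define C where "C = j * (b - 1) + 1"
    define T where "T = d + rb b e"
    have "power_sum b (1 + e * (b - 1)) (b ^ n + (b - 1) * rb b e)"
      using power_sum_add [OF power_sum_replicate [of b 1 n] power_sum_repunit [of b "b - 1" e]]
      by (simp add: mult.commute)
    moreover have "1 + e * (b - 1) + (j - e) * (b - 1) = C"
      using 1 by (simp add: C_def flip: add_mult_distrib)
    moreover have "b ^ n + (b - 1) * rb b e = C + (b - 1) * T"
      using power_eq_rb unfolding C_def T_def r_def [symmetric] r by (simp add: c algebra_simps)
    ultimately have "power_sum b C (C + (b - 1) * T)"
      using power_sum_more_terms [of b "1 + e * (b - 1)" _ "j - e"] b \<open>j * (b - 1) + 1 \<le> b ^ n\<close>
      unfolding C_def by simp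
    moreover have "pf_element a b n j + gen_a a b n i = C * r + a * T"
      unfolding pf_gen C_def T_def r by (simp add: algebra_simps)
    ultimately show ?thesis
      using mem_S_sg_of_power_sum [OF b] unfolding r_def by (metis of_nat_add)
  next
    case 2
    obtain f where f: "rb b e = j + f"
      using 2 le_rb [of b e] b le_Suc_ex by (metis le_trans less_imp_le one_le_numeral)
    define C where "C = a + 1 + j * (b - 1)"
    have bpow: "b ^ e = (b - 1) * rb b e + 1"
      using rb_pred_mult [of b e] b by simp
    have "power_sum b (a + 1) (a + b ^ e)"
      using power_sum_add [OF power_sum_replicate [of b a 0] power_sum_replicate [of b 1 e]] by simp
    moreover have "C \<le> a + b ^ e"
      using bpow f unfolding C_def by (simp add: c algebra_simps)
    moreover have "a + b ^ e = C + (b - 1) * f"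
      using bpow f unfolding C_def by (simp add: c algebra_simps)
    ultimately have "power_sum b C (C + (b - 1) * f)"
      using power_sum_more_terms [of b "a + 1" _ j] b unfolding C_def by simp
    moreover have "pf_element a b n j + gen_a a b n i = C * r + a * f"
      unfolding pf_gen C_def f r by (simp add: algebra_simps)
    ultimately show ?thesis
      using mem_S_sg_of_power_sum [OF b] unfolding r_def by (metis of_nat_add)
  qed
qed

text \<open>Choose \<open>T < r_b(n)\<close> with \<open>a T \<equiv> y\<close> modulo \<open>r_b(n)\<close>. The expansion of \<open>T\<close> gives an
  element \<open>w \<equiv> y\<close> of the semigroup; if \<open>y \<ge> w\<close> then \<open>y \<in> S\<close>, otherwise the complementary
  expansion shows \<open>pf_element j + r_b(n) - w \<in> S\<close>, hence \<open>pf_element j - y \<in> S\<close>.\<close>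
lemma pf_element_diff_mem:
  assumes y: "y \<notin> S_sg a b n"
  shows "\<exists>j. 1 \<le> j \<and> j < n \<and> int (pf_element a b n j) - y \<in> S_sg a b n"
proof -
  define r where "r = rb b n"
  have "r > 0" using n_le_rb n unfolding r_def by simp
  obtain u where u: "[int a * u = 1] (mod int r)"
    using cong_solve_coprime_int [of "int a" "int r"] coprime unfolding r_def
    by (auto simp: coprime_commute)
  define T where "T = nat ((u * y) mod int r)"
  have "T < r"
    using \<open>r > 0\<close> by (simp add: T_def nat_less_iff)
  have "[int a * int T = int a * u * y] (mod int r)"
    using \<open>r > 0\<close> by (simp add: T_def cong_def mod_mult_right_eq mult.assoc)
  also have "[int a * u * y = y] (mod int r)"
    using cong_mult [OF u cong_refl [of y]] by simp
  finally have "int r dvd int a * int T - y"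
    by (simp add: cong_iff_dvd_diff)
  obtain j C C' T' where j: "1 \<le> j" "j < n" and CT: "repunit_sum b C T" "repunit_sum b C' T'"
    and sums: "C + C' = j * (b - 1) + 1" "T + T' + j = r"
    using repunit_sum_complement [OF b n \<open>T < r\<close> [unfolded r_def]] unfolding r_def by blast
  define w where "w = C * r + a * T"
  have "int r dvd int w - y"
    using \<open>int r dvd int a * int T - y\<close> unfolding w_def
    by (metis (no_types) add_diff_eq dvd_add dvd_triv_right of_nat_add of_nat_mult)
  then obtain k where k: "int w - y = int r * k"
    by blast
  show ?thesis
  proof (cases "k \<le> 0")
    case True
    then have "y = int ((C + nat (- k)) * r + a * T)"
      using k unfolding w_def by (simp add: algebra_simps)
    then have "y \<in> S_sg a b n"
      using repunit_sum_pad [OF CT(1)] unfolding mem_S_sg_iff r_def by blast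
    with y show ?thesis by contradiction
  next
    case False
    have "r - j = T + T'"
      using sums(2) by simp
    then have "pf_element a b n j + r = (C + C') * r + a * (T + T')"
      unfolding pf_element_def r_def [symmetric] sums(1) by (simp add: algebra_simps)
    then have "int (pf_element a b n j) + int r = (int C + int C') * int r + int a * (int T + int T')"
      by (metis of_nat_add of_nat_mult)
    then have "int (pf_element a b n j) - y = int ((C' + nat (k - 1)) * r + a * T')"
      using k False unfolding w_def by (simp add: algebra_simps)
    then have "int (pf_element a b n j) - y \<in> S_sg a b n"
      using repunit_sum_pad [OF CT(2)] unfolding mem_S_sg_iff r_def by blast
    with j show ?thesis by blast
  qed
qed

lemma int_pf_element:
  assumes "j \<le> rb b n"
  shows "int (pf_element a b n j) = int j * (int b ^ n - 1 - int a) + int a * int (rb b n)"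
proof -
  have "int (pf_element a b n j) = int j * int (b - 1) * int (rb b n) + int a * (int (rb b n) - int j)"
    unfolding pf_element_def by (simp only: of_nat_add of_nat_mult of_nat_diff [OF assms])
  moreover have "int b ^ n = int (b - 1) * int (rb b n) + 1"
    using arg_cong [OF power_eq_rb, of int] by simp
  ultimately show ?thesis
    by (simp add: algebra_simps)
qed

lemma PF_S_sg:
  "PF (S_sg a b n) = (\<lambda>j. int j * (int b ^ n - 1 - int a) + int a * int (rb b n)) ` {1..<n}"
proof -
  have "PF (S_sg a b n) = (\<lambda>j. int (pf_element a b n j)) ` {1..<n}"
  proof (intro equalityI subsetI)
    fix y
    assume "y \<in> PF (S_sg a b n)"
    then have y: "y \<notin> S_sg a b n" and closed: "\<forall>s \<in> S_sg a b n - {0}. y + s \<in> S_sg a b n"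
      by (auto simp: PF_def)
    obtain j where j: "1 \<le> j" "j < n" and diff: "int (pf_element a b n j) - y \<in> S_sg a b n"
      using pf_element_diff_mem [OF y] by blast
    have "y = int (pf_element a b n j)"
    proof (rule ccontr)
      assume "y \<noteq> int (pf_element a b n j)"
      then have "int (pf_element a b n j) - y \<in> S_sg a b n - {0}"
        using diff by simp
      then have "y + (int (pf_element a b n j) - y) \<in> S_sg a b n"
        using closed by blast
      then show False
        using pf_element_not_mem [OF j] by simp
    qed
    with j show "y \<in> (\<lambda>j. int (pf_element a b n j)) ` {1..<n}"
      by simp
  next
    fix x
    assume "x \<in> (\<lambda>j. int (pf_element a b n j)) ` {1..<n}"
    then obtain j where j: "1 \<le> j" "j < n" and x: "x = int (pf_element a b n j)"
      by auto
    have "\<forall>g \<in> {int (gen_a a b n i) | i. i \<ge> 1}. x + g \<in> S_sg a b n"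
      using pf_element_add_gen_mem [OF j] x by blast
    then have "\<forall>s \<in> S_sg a b n - {0}. x + s \<in> S_sg a b n"
      using add_mem_semigroup_gen unfolding S_sg_def by blast
    with pf_element_not_mem [OF j] x show "x \<in> PF (S_sg a b n)"
      by (simp add: PF_def)
  qed
  also have "\<dots> = (\<lambda>j. int j * (int b ^ n - 1 - int a) + int a * int (rb b n)) ` {1..<n}"
    using int_pf_element n_le_rb by (intro image_cong) auto
  finally show ?thesis .
qed

text \<open>Coprimality forces \<open>a \<noteq> (b - 1) r_b(n)\<close>, so the elements of \<open>PF\<close> are pairwise distinct.\<close>
lemma card_PF_S_sg: "card (PF (S_sg a b n)) = n - 1"
proof -
  have "int b ^ n - 1 - int a \<noteq> 0"
  proof
    assume "int b ^ n - 1 - int a = 0"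
    then have "int a = int ((b - 1) * rb b n)"
      using arg_cong [OF power_eq_rb, of int] by simp
    then have "a = (b - 1) * rb b n"
      by (simp only: of_nat_eq_iff)
    then have "coprime (rb b n) (rb b n)"
      using coprime by simp
    then show False
      using n_le_rb n by simp
  qed
  then have "inj_on (\<lambda>j. int j * (int b ^ n - 1 - int a) + int a * int (rb b n)) {1..<n}"
    by (intro inj_onI) simp
  then show ?thesis
    unfolding PF_S_sg by (simp add: card_image)
qed

end

theorem corollary30:
  fixes a b n :: nat
  assumes "a > 0" and "b > 1" and "n > 1" and "coprime (rb b n) a"
  shows "PF (S_sg a b n) =
           (\<lambda>i. (int n - int i + 1) * (int b ^ n - 1 - int a) + int a * int (rb b n)) ` {2..n}
         \<and> sg_type (S_sg a b n) = n - 1"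
proof -
  have b: "b \<ge> 2" and n: "n \<ge> 2"
    using assms(2,3) by simp_all
  have "{1..<n} = (\<lambda>i. n + 1 - i) ` {2..n}"
  proof (intro equalityI subsetI)
    fix j
    assume "j \<in> {1..<n}"
    then show "j \<in> (\<lambda>i. n + 1 - i) ` {2..n}"
      by (intro image_eqI [of _ _ "n + 1 - j"]) auto
  qed auto
  then have "(\<lambda>j. int j * (int b ^ n - 1 - int a) + int a * int (rb b n)) ` {1..<n}
      = (\<lambda>i. (int n - int i + 1) * (int b ^ n - 1 - int a) + int a * int (rb b n)) ` {2..n}"
    by (auto simp: image_image of_nat_diff intro!: image_cong)
  then show ?thesis
    using PF_S_sg [OF b n assms(4)] card_PF_S_sg [OF b n assms(4)] by (simp add: sg_type_def)
qed

end
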